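(* Let $(V,\|\cdot\|,V_+)$ be a normal ordered vector space and let $d=d_V$. Then $d$ is a proper gauge on $V$ (so $(V,d)$ is a gauged space), and the normed ordered vector space induced by $d$ is exactly $(V,\|\cdot\|,V_+)$; that is, $V_+=\{x\in V:\ d(-x)=0\}$ and $\|x\|=\max\{d(x),d(-x)\}$ for all $x\in V$.
   Context: A normed ordered vector space $(V,\|\cdot\|,V_+)$ is a real normed vector space $V$ together with a closed proper cone $V_+$ (i.e. $V_+$ is closed under addition and multiplication by nonnegative scalars, and $V_+\cap(-V_+)=\{0\}$); write $x\le y$ iff $y-x\in V_+$. It is called normal if $x\le y\le z$ implies $\|y\|\le\max\{\|x\|,\|z\|\}$. A gauge on a real vector space $V$ is a map $\nu:V\to[0,\infty)$ with $\nu(x+y)\le\nu(x)+\nu(y)$ and $\nu(tx)=t\nu(x)$ for all $x,y\in V$, $t>0$; its conjugate is $\overline{\nu}(x)=\nu(-x)$. A gauge is proper if for every $x\neq 0$, $\nu(x)\ne 0$ or $\overline{\nu}(x)\neq 0$; a gauged space is a pair $(V,\nu)$ with $\nu$ a proper gauge. The normed ordered vector space induced by a gauge $\nu$ is $(V,\|\cdot\|_\nu,V_{+,\nu})$ with $\|x\|_\nu=\max\{\nu(x),\overline{\nu}(x)\}$ and $V_{+,\nu}=\ker\overline{\nu}=\{x:\nu(-x)=0\}$. For a normed ordered vector space, $d_V(x)=\inf\{\|x+p\|:p\in V_+\}$ (the distance from $x$ to $-V_+$). *)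

theory Defs
  imports "HOL-Analysis.Analysis"
begin

definition closed_proper_cone :: "'a::real_normed_vector set \<Rightarrow> bool" where
  "closed_proper_cone P \<longleftrightarrow>
     closed P \<and> P \<noteq> {} \<and>
     (\<forall>x\<in>P. \<forall>y\<in>P. x + y \<in> P) \<and>
     (\<forall>x\<in>P. \<forall>t::real. t \<ge> 0 \<longrightarrow> t *\<^sub>R x \<in> P) \<and>
     P \<inter> uminus ` P = {0}"

definition cone_le :: "'a::real_normed_vector set \<Rightarrow> 'a \<Rightarrow> 'a \<Rightarrow> bool" where
  "cone_le P x y \<longleftrightarrow> y - x \<in> P"

definition normal_cone :: "'a::real_normed_vector set \<Rightarrow> bool" where
  "normal_cone P \<longleftrightarrow>
     (\<forall>x y z. cone_le P x y \<and> cone_le P y z \<longrightarrow> norm y \<le> max (norm x) (norm z))"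

definition normal_ordered_space :: "'a::real_normed_vector set \<Rightarrow> bool" where
  "normal_ordered_space P \<longleftrightarrow> closed_proper_cone P \<and> normal_cone P"

definition gauge :: "('a::real_vector \<Rightarrow> real) \<Rightarrow> bool" where
  "gauge \<nu> \<longleftrightarrow>
     (\<forall>x. \<nu> x \<ge> 0) \<and>
     (\<forall>x y. \<nu> (x + y) \<le> \<nu> x + \<nu> y) \<and>
     (\<forall>x. \<forall>t::real. t > 0 \<longrightarrow> \<nu> (t *\<^sub>R x) = t * \<nu> x)"

definition conj_gauge :: "('a::real_vector \<Rightarrow> real) \<Rightarrow> 'a \<Rightarrow> real" where
  "conj_gauge \<nu> x = \<nu> (- x)"

definition proper_gauge :: "('a::real_vector \<Rightarrow> real) \<Rightarrow> bool" where
  "proper_gauge \<nu> \<longleftrightarrow> gauge \<nu> \<and>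
     (\<forall>x. x \<noteq> 0 \<longrightarrow> \<nu> x \<noteq> 0 \<or> conj_gauge \<nu> x \<noteq> 0)"

definition gauge_norm :: "('a::real_vector \<Rightarrow> real) \<Rightarrow> 'a \<Rightarrow> real" where
  "gauge_norm \<nu> x = max (\<nu> x) (conj_gauge \<nu> x)"

definition gauge_cone :: "('a::real_vector \<Rightarrow> real) \<Rightarrow> 'a set" where
  "gauge_cone \<nu> = {x. conj_gauge \<nu> x = 0}"

definition dist_neg_cone :: "'a::real_normed_vector set \<Rightarrow> 'a \<Rightarrow> real" where
  "dist_neg_cone P x = Inf ((\<lambda>p. norm (x + p)) ` P)"

end

theory Submission
  imports Defs
begin

text \<open>
  As the distance to the convex cone \<open>-P\<close>, \<open>d\<close> is sublinear. Testing with \<open>p = 0\<close> gives \<open>d x \<le> \<parallel>x\<parallel>\<close>; conversely, if both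
  \<open>\<parallel>x + p\<parallel>\<close> and \<open>\<parallel>q - x\<parallel>\<close> were smaller than \<open>\<parallel>x\<parallel>\<close> for some \<open>p, q \<in> P\<close>, then
  \<open>x - q \<le> x \<le> x + p\<close> would contradict normality, so \<open>\<parallel>x\<parallel> = max (d x) (d (-x))\<close>.
  Finally \<open>d (-x) = 0\<close> says that \<open>x\<close> is a limit of points of \<open>P\<close>, so the closed cone \<open>P\<close>
  is recovered as the kernel of the conjugate gauge.
\<close>

lemma dist_neg_cone_le:
  assumes "p \<in> P"
  shows "dist_neg_cone P x \<le> norm (x + p)"
  unfolding dist_neg_cone_def
  by (rule cInf_lower) (use assms in \<open>auto intro: bdd_belowI[where m=0]\<close>)

lemma dist_neg_cone_greatest:
  assumes "P \<noteq> {}" "\<And>p. p \<in> P \<Longrightarrow> c \<le> norm (x + p)"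
  shows "c \<le> dist_neg_cone P x"
  unfolding dist_neg_cone_def
  by (rule cInf_greatest) (use assms in auto)

lemma dist_neg_cone_less_iff:
  assumes "P \<noteq> {}"
  shows "dist_neg_cone P x < c \<longleftrightarrow> (\<exists>p\<in>P. norm (x + p) < c)"
  using assms unfolding dist_neg_cone_def
  by (subst cInf_less_iff) (auto intro: bdd_belowI[where m=0])

lemma dist_neg_cone_nonneg:
  assumes "P \<noteq> {}"
  shows "0 \<le> dist_neg_cone P x"
  by (rule dist_neg_cone_greatest[OF assms]) simp

lemma dist_neg_cone_add_le:
  assumes "P \<noteq> {}" and add: "\<And>p q. p \<in> P \<Longrightarrow> q \<in> P \<Longrightarrow> p + q \<in> P"
  shows "dist_neg_cone P (x + y) \<le> dist_neg_cone P x + dist_neg_cone P y"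
proof -
  let ?d = "dist_neg_cone P"
  have "?d (x + y) - ?d y \<le> ?d x"
  proof (rule dist_neg_cone_greatest[OF \<open>P \<noteq> {}\<close>])
    fix p assume p: "p \<in> P"
    have "?d (x + y) - norm (x + p) \<le> ?d y"
    proof (rule dist_neg_cone_greatest[OF \<open>P \<noteq> {}\<close>])
      fix q assume q: "q \<in> P"
      have "?d (x + y) \<le> norm ((x + p) + (y + q))"
        using dist_neg_cone_le[OF add[OF p q], of "x + y"] by (simp add: algebra_simps)
      also have "\<dots> \<le> norm (x + p) + norm (y + q)"
        by (rule norm_triangle_ineq)
      finally show "?d (x + y) - norm (x + p) \<le> norm (y + q)" by simp
    qed
    then show "?d (x + y) - ?d y \<le> norm (x + p)" by simp
  qed
  then show ?thesis by simp
qed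

lemma dist_neg_cone_scaleR_le:
  assumes "P \<noteq> {}" and scale: "\<And>p s. p \<in> P \<Longrightarrow> s \<ge> 0 \<Longrightarrow> s *\<^sub>R p \<in> P" and "t > 0"
  shows "dist_neg_cone P (t *\<^sub>R x) \<le> t * dist_neg_cone P x"
proof -
  have "dist_neg_cone P (t *\<^sub>R x) / t \<le> dist_neg_cone P x"
  proof (rule dist_neg_cone_greatest[OF \<open>P \<noteq> {}\<close>])
    fix p assume "p \<in> P"
    have "dist_neg_cone P (t *\<^sub>R x) \<le> norm (t *\<^sub>R x + t *\<^sub>R p)"
      using dist_neg_cone_le[OF scale[OF \<open>p \<in> P\<close>]] \<open>t > 0\<close> by simp
    also have "\<dots> = t * norm (x + p)"
      using \<open>t > 0\<close> by (simp flip: scaleR_add_right)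
    finally show "dist_neg_cone P (t *\<^sub>R x) / t \<le> norm (x + p)"
      using \<open>t > 0\<close> by (simp add: divide_le_eq mult.commute)
  qed
  then show ?thesis
    using \<open>t > 0\<close> by (simp add: divide_le_eq mult.commute)
qed

lemma dist_neg_cone_scaleR:
  assumes "P \<noteq> {}" and scale: "\<And>p s. p \<in> P \<Longrightarrow> s \<ge> 0 \<Longrightarrow> s *\<^sub>R p \<in> P" and "t > 0"
  shows "dist_neg_cone P (t *\<^sub>R x) = t * dist_neg_cone P x"
proof (rule antisym)
  show "dist_neg_cone P (t *\<^sub>R x) \<le> t * dist_neg_cone P x"
    using dist_neg_cone_scaleR_le assms by blast
  have "dist_neg_cone P x = dist_neg_cone P (inverse t *\<^sub>R (t *\<^sub>R x))"
    using \<open>t > 0\<close> by simp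
  also have "\<dots> \<le> inverse t * dist_neg_cone P (t *\<^sub>R x)"
    by (rule dist_neg_cone_scaleR_le[OF \<open>P \<noteq> {}\<close> scale]) (use \<open>t > 0\<close> in simp_all)
  finally show "t * dist_neg_cone P x \<le> dist_neg_cone P (t *\<^sub>R x)"
    using \<open>t > 0\<close> by (simp add: field_simps)
qed

lemma gauge_dist_neg_cone:
  assumes "P \<noteq> {}"
    and "\<And>p q. p \<in> P \<Longrightarrow> q \<in> P \<Longrightarrow> p + q \<in> P"
    and "\<And>p s. p \<in> P \<Longrightarrow> s \<ge> 0 \<Longrightarrow> s *\<^sub>R p \<in> P"
  shows "gauge (dist_neg_cone P)"
  unfolding gauge_def
  using dist_neg_cone_nonneg[OF assms(1)] dist_neg_cone_add_le[OF assms(1,2)]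
    dist_neg_cone_scaleR[OF assms(1,3)] by blast

lemma gauge_cone_dist_neg_cone:
  assumes "closed P" "P \<noteq> {}"
  shows "gauge_cone (dist_neg_cone P) = P"
proof (intro set_eqI iffI)
  fix x assume "x \<in> P"
  then have "dist_neg_cone P (- x) \<le> 0"
    using dist_neg_cone_le[of x P "- x"] by simp
  with dist_neg_cone_nonneg[OF \<open>P \<noteq> {}\<close>] show "x \<in> gauge_cone (dist_neg_cone P)"
    unfolding gauge_cone_def conj_gauge_def by (simp add: order_antisym)
next
  fix x assume "x \<in> gauge_cone (dist_neg_cone P)"
  then have "dist_neg_cone P (- x) < e" if "e > 0" for e
    using that unfolding gauge_cone_def conj_gauge_def by simp
  then have "\<exists>p\<in>P. dist p x < e" if "e > 0" for e
    using that dist_neg_cone_less_iff[OF \<open>P \<noteq> {}\<close>] by (simp add: dist_norm add.commute)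
  then show "x \<in> P"
    using \<open>closed P\<close> closed_approachable by blast
qed

lemma norm_eq_max_dist_neg_cone:
  assumes "0 \<in> P" and "normal_cone P"
  shows "norm x = max (dist_neg_cone P x) (dist_neg_cone P (- x))"
proof (rule antisym)
  show "max (dist_neg_cone P x) (dist_neg_cone P (- x)) \<le> norm x"
    using dist_neg_cone_le[OF \<open>0 \<in> P\<close>, of x] dist_neg_cone_le[OF \<open>0 \<in> P\<close>, of "- x"] by simp
  show "norm x \<le> max (dist_neg_cone P x) (dist_neg_cone P (- x))"
  proof (rule ccontr)
    assume "\<not> ?thesis"
    then have "dist_neg_cone P x < norm x" "dist_neg_cone P (- x) < norm x"
      by simp_all
    then obtain p q where "p \<in> P" "norm (x + p) < norm x" "q \<in> P" "norm (- x + q) < norm x"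
      using dist_neg_cone_less_iff[of P] \<open>0 \<in> P\<close> by blast
    moreover have "norm x \<le> max (norm (x - q)) (norm (x + p))"
      using \<open>normal_cone P\<close> \<open>p \<in> P\<close> \<open>q \<in> P\<close>
      unfolding normal_cone_def cone_le_def by auto
    moreover have "norm (x - q) = norm (- x + q)"
      by (metis minus_diff_eq norm_minus_cancel uminus_add_conv_diff)
    ultimately show False by linarith
  qed
qed

lemma proper_gaugeI_norm:
  assumes "gauge \<nu>" and norm_eq: "\<And>x. norm x = max (\<nu> x) (\<nu> (- x))"
  shows "proper_gauge \<nu>"
  unfolding proper_gauge_def conj_gauge_def
proof (intro conjI allI impI \<open>gauge \<nu>\<close>)
  fix x :: 'a assume "x \<noteq> 0"
  then have "max (\<nu> x) (\<nu> (- x)) \<noteq> 0"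
    using norm_eq[of x] by (metis norm_eq_zero)
  then show "\<nu> x \<noteq> 0 \<or> \<nu> (- x) \<noteq> 0"
    by auto
qed

theorem proposition2p7:
  fixes P :: "'a::real_normed_vector set"
  assumes "normal_ordered_space P"
  shows "proper_gauge (dist_neg_cone P)
    \<and> gauge_cone (dist_neg_cone P) = P
    \<and> (\<forall>x. gauge_norm (dist_neg_cone P) x = norm x)"
proof -
  have "closed P" and "P \<noteq> {}" and "normal_cone P"
    and add: "\<And>p q. p \<in> P \<Longrightarrow> q \<in> P \<Longrightarrow> p + q \<in> P"
    and scale: "\<And>p s. p \<in> P \<Longrightarrow> s \<ge> 0 \<Longrightarrow> s *\<^sub>R p \<in> P"
    using assms unfolding normal_ordered_space_def closed_proper_cone_def by blast+
  then have "0 \<in> P"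
    using scale[of _ 0] by auto
  have norm_eq: "norm x = max (dist_neg_cone P x) (dist_neg_cone P (- x))" for x
    using norm_eq_max_dist_neg_cone[OF \<open>0 \<in> P\<close> \<open>normal_cone P\<close>] .
  have "gauge (dist_neg_cone P)"
    using gauge_dist_neg_cone[OF \<open>P \<noteq> {}\<close> add scale] .
  then have "proper_gauge (dist_neg_cone P)"
    using norm_eq by (rule proper_gaugeI_norm)
  moreover have "gauge_cone (dist_neg_cone P) = P"
    using gauge_cone_dist_neg_cone[OF \<open>closed P\<close> \<open>P \<noteq> {}\<close>] .
  moreover have "gauge_norm (dist_neg_cone P) x = norm x" for x
    unfolding gauge_norm_def conj_gauge_def by (rule norm_eq[symmetric])
  ultimately show ?thesis
    by blast
qed

end
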